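(* Let $V$ be a finite set of truth values containing distinct elements $1,0$, and let $\models$ be an intersective mixed consequence truth-relation with minimal representation $\models_{\mathcal{D}_p^1,\mathcal{D}_c^1}\cap\dots\cap\models_{\mathcal{D}_p^K,\mathcal{D}_c^K}$. Let $f:V^n\to V$ and let $\mathcal{B}^p,\mathcal{B}^c\subseteq\mathcal{P}(\{1,\dots,n\})\times\mathcal{P}(\{1,\dots,n\})$. Then $f$ satisfies the regularity rule $(\mathcal{B}^p,\mathcal{B}^c)$ at the level of truth values, i.e. for all $\gamma,\delta\subseteq V$ and $x_1,\dots,x_n\in V$: $\gamma\cup\{f(x_1,\dots,x_n)\}\models\delta$ iff for all $(B_p,B_c)\in\mathcal{B}^p$: $\gamma\cup\{x_i:i\in B_p\}\models\{x_i:i\in B_c\}\cup\delta$, and $\gamma\models\{f(x_1,\dots,x_n)\}\cup\delta$ iff for all $(B_p,B_c)\in\mathcal{B}^c$: $\gamma\cup\{x_i:i\in B_p\}\models\{x_i:i\in B_c\}\cup\delta$, if and only if for every $k\in\{1,\dots,K\}$ and all $x_1,\dots,x_n\in V$: $f(x_1,\dots,x_n)\notin\mathcal{D}_p^k$ iff for all $(B_p,B_c)\in\mathcal{B}^p$: ($\{x_i:i\in B_p\}\subseteq\mathcal{D}_p^k\Rightarrow\{x_i:i\in B_c\}\cap\mathcal{D}_c^k\neq\emptyset$); and $f(x_1,\dots,x_n)\in\mathcal{D}_c^k$ iff for all $(B_p,B_c)\in\mathcal{B}^c$: ($\{x_i:i\in B_p\}\subseteq\mathcal{D}_p^k\Rightarrow\{x_i:i\in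 B_c\}\cap\mathcal{D}_c^k\neq\emptyset$).
   Context: A set of designated values is a subset $\mathcal{D}\subseteq V$ with $1\in\mathcal{D}$, $0\notin\mathcal{D}$. For such $\mathcal{D}_p,\mathcal{D}_c$, the mixed consequence truth-relation is $\gamma\models_{\mathcal{D}_p,\mathcal{D}_c}\delta$ iff ($\gamma\subseteq\mathcal{D}_p\Rightarrow\delta\cap\mathcal{D}_c\neq\emptyset$), for $\gamma,\delta\subseteq V$. An intersective mixed consequence truth-relation is a finite intersection of mixed ones; a list of mixed relations whose intersection is it is a representation, and a minimal representation is one with the least possible number of members. Empty conjunctions count as true. *)

theory Defs
  imports "HOL-Library.FuncSet"
begin

definition designated :: "'v set \<Rightarrow> 'v \<Rightarrow> 'v \<Rightarrow> 'v set \<Rightarrow> bool" where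
  "designated V one zero D \<longleftrightarrow> D \<subseteq> V \<and> one \<in> D \<and> zero \<notin> D"

definition mixed_rel :: "'v set \<Rightarrow> 'v set \<Rightarrow> 'v set \<Rightarrow> 'v set \<Rightarrow> bool" where
  "mixed_rel Dp Dc \<gamma> \<delta> \<longleftrightarrow> (\<gamma> \<subseteq> Dp \<longrightarrow> \<delta> \<inter> Dc \<noteq> {})"

text \<open>A representation of R: a list of pairs (Dp, Dc) of designated sets whose
  mixed relations intersect to R (on subsets of V). The members are indexed
  0..K-1 here instead of 1..K.\<close>

definition is_representation ::
  "'v set \<Rightarrow> 'v \<Rightarrow> 'v \<Rightarrow> ('v set \<Rightarrow> 'v set \<Rightarrow> bool) \<Rightarrow> ('v set \<times> 'v set) list \<Rightarrow> bool" where
  "is_representation V one zero R reps \<longleftrightarrow>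
     (\<forall>k < length reps. designated V one zero (fst (reps ! k)) \<and> designated V one zero (snd (reps ! k))) \<and>
     (\<forall>\<gamma> \<delta>. \<gamma> \<subseteq> V \<longrightarrow> \<delta> \<subseteq> V \<longrightarrow>
        (R \<gamma> \<delta> \<longleftrightarrow> (\<forall>k < length reps. mixed_rel (fst (reps ! k)) (snd (reps ! k)) \<gamma> \<delta>)))"

definition intersective_mixed ::
  "'v set \<Rightarrow> 'v \<Rightarrow> 'v \<Rightarrow> ('v set \<Rightarrow> 'v set \<Rightarrow> bool) \<Rightarrow> bool" where
  "intersective_mixed V one zero R \<longleftrightarrow> (\<exists>reps. is_representation V one zero R reps)"

definition is_minimal_representation ::
  "'v set \<Rightarrow> 'v \<Rightarrow> 'v \<Rightarrow> ('v set \<Rightarrow> 'v set \<Rightarrow> bool) \<Rightarrow> ('v set \<times> 'v set) list \<Rightarrow> bool" where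
  "is_minimal_representation V one zero R reps \<longleftrightarrow>
     is_representation V one zero R reps \<and>
     (\<forall>reps'. is_representation V one zero R reps' \<longrightarrow> length reps \<le> length reps')"

end

theory Submission
  imports Defs
begin

(* A representation splits R into its components: R (\<gamma> \<union> A) (B \<union> \<delta>) holds iff every
   component k validates \<gamma> \<Turnstile> \<delta> or A \<Turnstile> B. So the regularity rule holds for R in any
   context (\<gamma>, \<delta>) once it holds in every component with empty context. Conversely, in a
   minimal representation no component is dominated by another (if D_p^k \<subseteq> D_p^j and
   D_c^j \<subseteq> D_c^k with j \<noteq> k, component k could be dropped), so the probe context
   (D_p^k, V - D_c^k) is refuted by component k alone, and there the rule for R is exactly
   the rule for component k. *)

lemma mixed_rel_antimono:
  assumes "D \<subseteq> D'" and "E' \<subseteq> E" and "mixed_rel D' E' \<gamma> \<delta>"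
  shows "mixed_rel D E \<gamma> \<delta>"
  using assms unfolding mixed_rel_def by blast

lemma mixed_rel_Un:
  "mixed_rel D E (\<gamma> \<union> A) (B \<union> \<delta>) \<longleftrightarrow> mixed_rel D E \<gamma> \<delta> \<or> mixed_rel D E A B"
  unfolding mixed_rel_def by blast

lemma is_representation_iff_set:
  "is_representation V one zero R reps \<longleftrightarrow>
     (\<forall>p\<in>set reps. designated V one zero (fst p) \<and> designated V one zero (snd p)) \<and>
     (\<forall>\<gamma> \<delta>. \<gamma> \<subseteq> V \<longrightarrow> \<delta> \<subseteq> V \<longrightarrow>
        (R \<gamma> \<delta> \<longleftrightarrow> (\<forall>p\<in>set reps. mixed_rel (fst p) (snd p) \<gamma> \<delta>)))"
  unfolding is_representation_def by (simp add: all_set_conv_all_nth)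

lemma representation_nth_subset:
  assumes "is_representation V one zero R reps" and "k < length reps"
  shows "fst (reps ! k) \<subseteq> V" and "snd (reps ! k) \<subseteq> V"
  using assms unfolding is_representation_def designated_def by auto

lemma is_representation_remove_dominated:
  assumes rep: "is_representation V one zero R reps"
    and "k < length reps" and "j < length reps" and "j \<noteq> k"
    and "fst (reps ! k) \<subseteq> fst (reps ! j)" and "snd (reps ! j) \<subseteq> snd (reps ! k)"
  shows "is_representation V one zero R (map ((!) reps) (filter (\<lambda>i. i \<noteq> k) [0..<length reps]))"
    (is "is_representation V one zero R ?reps'")
proof -
  have set_reps': "set ?reps' = (!) reps ` {i. i < length reps \<and> i \<noteq> k}"
    by auto
  have "set reps = (!) reps ` {..<length reps}"
    by (metis map_nth set_map set_upt lessThan_atLeast0)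
  also have "{..<length reps} = insert k {i. i < length reps \<and> i \<noteq> k}"
    using \<open>k < length reps\<close> by auto
  finally have "set reps = insert (reps ! k) (set ?reps')"
    by (simp add: set_reps')
  moreover have "reps ! j \<in> set ?reps'"
    using \<open>j < length reps\<close> \<open>j \<noteq> k\<close> by (simp add: set_reps')
  moreover have "mixed_rel (fst (reps ! j)) (snd (reps ! j)) \<gamma> \<delta> \<Longrightarrow>
      mixed_rel (fst (reps ! k)) (snd (reps ! k)) \<gamma> \<delta>" for \<gamma> \<delta>
    using assms(5,6) by (rule mixed_rel_antimono)
  ultimately have same_meet: "(\<forall>p\<in>set reps. mixed_rel (fst p) (snd p) \<gamma> \<delta>) \<longleftrightarrow>
      (\<forall>p\<in>set ?reps'. mixed_rel (fst p) (snd p) \<gamma> \<delta>)" for \<gamma> \<delta>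
    by (metis insert_iff)
  have "set ?reps' \<subseteq> set reps"
    by (auto simp: set_reps')
  with rep show ?thesis
    unfolding is_representation_iff_set same_meet by blast
qed

lemma minimal_representation_undominated:
  assumes min: "is_minimal_representation V one zero R reps"
    and "k < length reps" and "j < length reps"
    and "fst (reps ! k) \<subseteq> fst (reps ! j)" and "snd (reps ! j) \<subseteq> snd (reps ! k)"
  shows "j = k"
proof (rule ccontr)
  assume "j \<noteq> k"
  let ?reps' = "map ((!) reps) (filter (\<lambda>i. i \<noteq> k) [0..<length reps])"
  have "is_representation V one zero R ?reps'"
    using min assms(2-5) \<open>j \<noteq> k\<close> unfolding is_minimal_representation_def
    by (blast intro: is_representation_remove_dominated)
  then have "length reps \<le> length ?reps'"
    using min unfolding is_minimal_representation_def by blast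
  moreover have "length ?reps' < length reps"
    using length_filter_less[of k "[0..<length reps]" "\<lambda>i. i \<noteq> k"] \<open>k < length reps\<close>
    by simp
  ultimately show False by simp
qed

lemma minimal_representation_mixed_rel_probe_iff:
  assumes min: "is_minimal_representation V one zero R reps"
    and k: "k < length reps" and j: "j < length reps"
  shows "mixed_rel (fst (reps ! j)) (snd (reps ! j)) (fst (reps ! k)) (V - snd (reps ! k)) \<longleftrightarrow> j \<noteq> k"
proof -
  have "snd (reps ! j) \<subseteq> V"
    using representation_nth_subset(2)[OF _ j] min unfolding is_minimal_representation_def by blast
  then have "\<not> mixed_rel (fst (reps ! j)) (snd (reps ! j)) (fst (reps ! k)) (V - snd (reps ! k)) \<longleftrightarrow>
      fst (reps ! k) \<subseteq> fst (reps ! j) \<and> snd (reps ! j) \<subseteq> snd (reps ! k)"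
    using j unfolding mixed_rel_def by blast
  then show ?thesis
    using minimal_representation_undominated[OF min k j] by blast
qed

lemma representation_Un_iff:
  assumes "is_representation V one zero R reps"
    and "\<gamma> \<subseteq> V" and "\<delta> \<subseteq> V" and "A \<subseteq> V" and "B \<subseteq> V"
  shows "R (\<gamma> \<union> A) (B \<union> \<delta>) \<longleftrightarrow>
    (\<forall>k<length reps. mixed_rel (fst (reps ! k)) (snd (reps ! k)) \<gamma> \<delta> \<or>
                     mixed_rel (fst (reps ! k)) (snd (reps ! k)) A B)"
  using assms by (simp add: is_representation_def mixed_rel_Un)

lemma representation_rule_iff:
  assumes rep: "is_representation V one zero R reps" and "\<gamma> \<subseteq> V" and "\<delta> \<subseteq> V"
    and "x ` I \<subseteq> V" and "B \<subseteq> Pow I \<times> Pow I"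
  shows "(\<forall>(bp, bc) \<in> B. R (\<gamma> \<union> x ` bp) (x ` bc \<union> \<delta>)) \<longleftrightarrow>
    (\<forall>k<length reps. mixed_rel (fst (reps ! k)) (snd (reps ! k)) \<gamma> \<delta> \<or>
       (\<forall>(bp, bc) \<in> B. mixed_rel (fst (reps ! k)) (snd (reps ! k)) (x ` bp) (x ` bc)))"
proof -
  have "R (\<gamma> \<union> x ` bp) (x ` bc \<union> \<delta>) \<longleftrightarrow>
      (\<forall>k<length reps. mixed_rel (fst (reps ! k)) (snd (reps ! k)) \<gamma> \<delta> \<or>
                       mixed_rel (fst (reps ! k)) (snd (reps ! k)) (x ` bp) (x ` bc))"
    if "(bp, bc) \<in> B" for bp bc
    using that assms by (intro representation_Un_iff[OF rep]) blast+
  then show ?thesis by blast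
qed

lemma minimal_representation_probe_ball_disj_iff:
  assumes "is_minimal_representation V one zero R reps" and "k < length reps"
  shows "(\<forall>j<length reps.
            mixed_rel (fst (reps ! j)) (snd (reps ! j)) (fst (reps ! k)) (V - snd (reps ! k)) \<or> P j)
         \<longleftrightarrow> P k"
  using minimal_representation_mixed_rel_probe_iff[OF assms] assms(2) by blast

lemma representation_rule_if_components:
  assumes rep: "is_representation V one zero R reps"
    and "\<gamma> \<subseteq> V" and "\<delta> \<subseteq> V" and "A \<subseteq> V" and "B \<subseteq> V"
    and "x ` I \<subseteq> V" and "Bs \<subseteq> Pow I \<times> Pow I"
    and components: "\<forall>k<length reps. mixed_rel (fst (reps ! k)) (snd (reps ! k)) A B \<longleftrightarrow>
      (\<forall>(bp, bc) \<in> Bs. mixed_rel (fst (reps ! k)) (snd (reps ! k)) (x ` bp) (x ` bc))"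
  shows "R (\<gamma> \<union> A) (B \<union> \<delta>) \<longleftrightarrow> (\<forall>(bp, bc) \<in> Bs. R (\<gamma> \<union> x ` bp) (x ` bc \<union> \<delta>))"
proof -
  have "R (\<gamma> \<union> A) (B \<union> \<delta>) \<longleftrightarrow>
      (\<forall>k<length reps. mixed_rel (fst (reps ! k)) (snd (reps ! k)) \<gamma> \<delta> \<or>
                       mixed_rel (fst (reps ! k)) (snd (reps ! k)) A B)"
    using representation_Un_iff[OF rep assms(2-5)] .
  also have "\<dots> \<longleftrightarrow> (\<forall>k<length reps. mixed_rel (fst (reps ! k)) (snd (reps ! k)) \<gamma> \<delta> \<or>
      (\<forall>(bp, bc) \<in> Bs. mixed_rel (fst (reps ! k)) (snd (reps ! k)) (x ` bp) (x ` bc)))"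
    using components by simp
  also have "\<dots> \<longleftrightarrow> (\<forall>(bp, bc) \<in> Bs. R (\<gamma> \<union> x ` bp) (x ` bc \<union> \<delta>))"
    using representation_rule_iff[OF rep assms(2,3,6,7)] by simp
  finally show ?thesis .
qed

lemma minimal_representation_rule_at_probe:
  assumes min: "is_minimal_representation V one zero R reps" and k: "k < length reps"
    and "A \<subseteq> V" and "B \<subseteq> V" and "x ` I \<subseteq> V" and "Bs \<subseteq> Pow I \<times> Pow I"
  shows "(R (fst (reps ! k) \<union> A) (B \<union> (V - snd (reps ! k))) \<longleftrightarrow>
           (\<forall>(bp, bc) \<in> Bs. R (fst (reps ! k) \<union> x ` bp) (x ` bc \<union> (V - snd (reps ! k)))))
         \<longleftrightarrow> (mixed_rel (fst (reps ! k)) (snd (reps ! k)) A B \<longleftrightarrow>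
           (\<forall>(bp, bc) \<in> Bs. mixed_rel (fst (reps ! k)) (snd (reps ! k)) (x ` bp) (x ` bc)))"
proof -
  have rep: "is_representation V one zero R reps"
    using min unfolding is_minimal_representation_def by blast
  have D: "fst (reps ! k) \<subseteq> V" and E: "V - snd (reps ! k) \<subseteq> V"
    using representation_nth_subset[OF rep k] by blast+
  note isolate = minimal_representation_probe_ball_disj_iff[OF min k]
  show ?thesis
    unfolding representation_Un_iff[OF rep D E assms(3,4)] isolate
      representation_rule_iff[OF rep D E assms(5,6)] isolate ..
qed

definition regularity_holds ::
  "('v set \<Rightarrow> 'v set \<Rightarrow> bool) \<Rightarrow> 'v \<Rightarrow> (nat set \<times> nat set) set \<Rightarrow> (nat set \<times> nat set) set \<Rightarrow>
    (nat \<Rightarrow> 'v) \<Rightarrow> 'v set \<Rightarrow> 'v set \<Rightarrow> bool" where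
  "regularity_holds R v Bp Bc x \<gamma> \<delta> \<longleftrightarrow>
     (R (\<gamma> \<union> {v}) \<delta> \<longleftrightarrow> (\<forall>(bp, bc) \<in> Bp. R (\<gamma> \<union> x ` bp) (x ` bc \<union> \<delta>))) \<and>
     (R \<gamma> ({v} \<union> \<delta>) \<longleftrightarrow> (\<forall>(bp, bc) \<in> Bc. R (\<gamma> \<union> x ` bp) (x ` bc \<union> \<delta>)))"

lemma regularity_holds_mixed_rel_iff:
  "regularity_holds (mixed_rel D E) v Bp Bc x {} {} \<longleftrightarrow>
     (v \<notin> D \<longleftrightarrow> (\<forall>(bp, bc) \<in> Bp. x ` bp \<subseteq> D \<longrightarrow> x ` bc \<inter> E \<noteq> {})) \<and>
     (v \<in> E \<longleftrightarrow> (\<forall>(bp, bc) \<in> Bc. x ` bp \<subseteq> D \<longrightarrow> x ` bc \<inter> E \<noteq> {}))"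
  by (simp add: regularity_holds_def mixed_rel_def)

lemma representation_regularity_holds_if_components:
  assumes rep: "is_representation V one zero R reps" and "\<gamma> \<subseteq> V" and "\<delta> \<subseteq> V" and "v \<in> V"
    and "x ` I \<subseteq> V" and "Bp \<subseteq> Pow I \<times> Pow I" and "Bc \<subseteq> Pow I \<times> Pow I"
    and components: "\<forall>k<length reps.
      regularity_holds (mixed_rel (fst (reps ! k)) (snd (reps ! k))) v Bp Bc x {} {}"
  shows "regularity_holds R v Bp Bc x \<gamma> \<delta>"
proof -
  have "{v} \<subseteq> V" using \<open>v \<in> V\<close> by blast
  note left = representation_rule_if_components[OF rep assms(2,3) \<open>{v} \<subseteq> V\<close> empty_subsetI assms(5,6)]
  note right = representation_rule_if_components[OF rep assms(2,3) empty_subsetI \<open>{v} \<subseteq> V\<close> assms(5,7)]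
  show ?thesis
    using components left[unfolded Un_empty_left] right[unfolded Un_empty_right]
    by (simp add: regularity_holds_def)
qed

lemma minimal_representation_regularity_holds_at_probe:
  assumes "is_minimal_representation V one zero R reps" and "k < length reps" and "v \<in> V"
    and "x ` I \<subseteq> V" and "Bp \<subseteq> Pow I \<times> Pow I" and "Bc \<subseteq> Pow I \<times> Pow I"
  shows "regularity_holds R v Bp Bc x (fst (reps ! k)) (V - snd (reps ! k)) \<longleftrightarrow>
    regularity_holds (mixed_rel (fst (reps ! k)) (snd (reps ! k))) v Bp Bc x {} {}"
proof -
  have "{v} \<subseteq> V" using \<open>v \<in> V\<close> by blast
  note left = minimal_representation_rule_at_probe[OF assms(1,2) \<open>{v} \<subseteq> V\<close> empty_subsetI assms(4,5)]
  note right = minimal_representation_rule_at_probe[OF assms(1,2) empty_subsetI \<open>{v} \<subseteq> V\<close> assms(4,6)]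
  show ?thesis
    unfolding regularity_holds_def left[unfolded Un_empty_left] right[unfolded Un_empty_right]
    by simp
qed

theorem theorem3p11:
  fixes V :: "'v set" and one zero :: 'v
    and R :: "'v set \<Rightarrow> 'v set \<Rightarrow> bool"
    and reps :: "('v set \<times> 'v set) list"
    and n :: nat and f :: "(nat \<Rightarrow> 'v) \<Rightarrow> 'v"
    and Bp Bc :: "(nat set \<times> nat set) set"
  assumes "finite V" and "one \<in> V" and "zero \<in> V" and "one \<noteq> zero"
    and "intersective_mixed V one zero R"
    and "is_minimal_representation V one zero R reps"
    and "f \<in> ({1..n} \<rightarrow>\<^sub>E V) \<rightarrow> V"
    and "Bp \<subseteq> Pow {1..n} \<times> Pow {1..n}" and "Bc \<subseteq> Pow {1..n} \<times> Pow {1..n}"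
  shows "(\<forall>\<gamma> \<delta> x. \<gamma> \<subseteq> V \<longrightarrow> \<delta> \<subseteq> V \<longrightarrow> x \<in> ({1..n} \<rightarrow>\<^sub>E V) \<longrightarrow>
            (R (\<gamma> \<union> {f x}) \<delta> \<longleftrightarrow>
               (\<forall>(bp, bc) \<in> Bp. R (\<gamma> \<union> x ` bp) (x ` bc \<union> \<delta>))) \<and>
            (R \<gamma> ({f x} \<union> \<delta>) \<longleftrightarrow>
               (\<forall>(bp, bc) \<in> Bc. R (\<gamma> \<union> x ` bp) (x ` bc \<union> \<delta>))))
         \<longleftrightarrow>
         (\<forall>k < length reps. \<forall>x \<in> ({1..n} \<rightarrow>\<^sub>E V).
            (f x \<notin> fst (reps ! k) \<longleftrightarrow>
               (\<forall>(bp, bc) \<in> Bp. x ` bp \<subseteq> fst (reps ! k) \<longrightarrow> x ` bc \<inter> snd (reps ! k) \<noteq> {})) \<and>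
            (f x \<in> snd (reps ! k) \<longleftrightarrow>
               (\<forall>(bp, bc) \<in> Bc. x ` bp \<subseteq> fst (reps ! k) \<longrightarrow> x ` bc \<inter> snd (reps ! k) \<noteq> {})))"
proof -
  have rep: "is_representation V one zero R reps"
    using assms(6) unfolding is_minimal_representation_def by blast
  have f_in_V: "f x \<in> V" and image_in_V: "x ` {1..n} \<subseteq> V" if "x \<in> {1..n} \<rightarrow>\<^sub>E V" for x
    using assms(7) that by auto
  show ?thesis
    unfolding regularity_holds_mixed_rel_iff[symmetric] regularity_holds_def[symmetric]
  proof (intro iffI allI impI ballI)
    fix k x assume regular: "\<forall>\<gamma> \<delta> x. \<gamma> \<subseteq> V \<longrightarrow> \<delta> \<subseteq> V \<longrightarrow> x \<in> {1..n} \<rightarrow>\<^sub>E V \<longrightarrow>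
        regularity_holds R (f x) Bp Bc x \<gamma> \<delta>"
      and k: "k < length reps" and x: "x \<in> {1..n} \<rightarrow>\<^sub>E V"
    show "regularity_holds (mixed_rel (fst (reps ! k)) (snd (reps ! k))) (f x) Bp Bc x {} {}"
      using regular representation_nth_subset(1)[OF rep k] x
        minimal_representation_regularity_holds_at_probe[OF assms(6) k f_in_V[OF x] image_in_V[OF x] assms(8,9)]
      by blast
  next
    fix \<gamma> \<delta> x assume "\<forall>k<length reps. \<forall>x\<in>{1..n} \<rightarrow>\<^sub>E V.
        regularity_holds (mixed_rel (fst (reps ! k)) (snd (reps ! k))) (f x) Bp Bc x {} {}"
      and "\<gamma> \<subseteq> V" and "\<delta> \<subseteq> V" and x: "x \<in> {1..n} \<rightarrow>\<^sub>E V"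
    then show "regularity_holds R (f x) Bp Bc x \<gamma> \<delta>"
      by (intro representation_regularity_holds_if_components[OF rep _ _ f_in_V[OF x]
          image_in_V[OF x] assms(8,9)]) auto
  qed
qed

end
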